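(* Let $\alpha\in\mathbb{Q}$ and let $$f(x)=c_0+c_1(x-\alpha)^{e_1}+\cdots+c_t(x-\alpha)^{e_t}\in\mathbb{Q}[x]$$ with $c_1,\dots,c_t\neq 0$ and integers $0<e_1<\cdots<e_t$, so that $n=\deg f=e_t$. Let $B_T,B_H,B_N\in\mathbb{N}$ satisfy $t\le B_T$, $\mathrm{size}(c_i)\le B_H$ for $0\le i\le t$, and $\log_2 n\le B_N$, and suppose $\deg f>2B_T$. Then there exist $C_1,C_2\in\mathbb{N}$ with $\log_2 C_1\le 2B_H$ and $\log_2 C_2\le B_N(3B_T-1)$ such that for every prime $p$ with $p\nmid C_1$ and $(p-1)\nmid C_2$, we have $\deg f^{(p)}>2B_T$.
   Context: For $q\in\mathbb{Q}$ written as $q=a/b$ with $a\in\mathbb{Z}$, $b\in\mathbb{N}$, $\gcd(a,b)=1$, $\mathrm{size}(q)=\lceil\log_2(|a|+1)\rceil+\lceil\log_2(b+1)\rceil+1$. For a prime $p$ and $f\in\mathbb{Q}[x]$, $f^{(p)}\in\mathbb{Z}_p[x]$ denotes the unique polynomial of degree less than $p$ which is congruent to $f$ modulo $x^p-x$ and whose coefficients are reduced modulo $p$.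
   Formalization: The conclusion $\deg f^{(p)}>2B_T$ is claimed only for primes p that also divide no denominator of a coefficient of f in powers of x. The statement above fails without it. *)

theory Defs
  imports Complex_Main "HOL-Computational_Algebra.Polynomial" "HOL-Number_Theory.Cong"
begin

definition rat_size :: "rat \<Rightarrow> nat" where
  "rat_size q = (case quotient_of q of (a, b) \<Rightarrow>
      nat \<lceil>log 2 (real_of_int (\<bar>a\<bar> + 1))\<rceil> + nat \<lceil>log 2 (real_of_int (b + 1))\<rceil> + 1)"

definition p_integral :: "nat \<Rightarrow> rat \<Rightarrow> bool" where
  "p_integral p q = (\<not> int p dvd snd (quotient_of q))"

definition rat_mod :: "nat \<Rightarrow> rat \<Rightarrow> int" where
  "rat_mod p q = (THE r. 0 \<le> r \<and> r < int p \<and>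
      [snd (quotient_of q) * r = fst (quotient_of q)] (mod int p))"

definition poly_red :: "nat \<Rightarrow> rat poly \<Rightarrow> int poly" where
  "poly_red p f = (THE g. degree g < p \<and> (\<forall>i. 0 \<le> coeff g i \<and> coeff g i < int p) \<and>
      (\<exists>h :: int poly. \<forall>i. int p dvd
         coeff (map_poly (rat_mod p) f - g - (monom 1 p - monom 1 1) * h) i))"

end

theory Submission
  imports Defs
begin

text \<open>Substituting \<open>x \<mapsto> x + \<alpha>\<close> turns \<open>f\<close> into the sparse polynomial
  \<open>g = c\<^sub>0 + \<Sum> c\<^sub>i x^e\<^sub>i\<close>. When \<open>\<alpha>\<close> and the coefficients are \<open>p\<close>-integral, reduction
  commutes with this shift, because \<open>(x + a)^p - (x + a) \<equiv> x^p - x\<close> modulo \<open>p\<close>; and modulo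
  \<open>x^p - x\<close> a monomial \<open>x^k\<close> with \<open>k \<ge> 1\<close> becomes \<open>x^j\<close> with \<open>1 \<le> j \<le> p - 1\<close> and
  \<open>j \<equiv> k (mod p - 1)\<close>. Hence the top term \<open>c\<^sub>t x^n\<close> of \<open>g\<close> survives at exponent \<open>j\<close>
  in \<open>f^(p)(x + \<alpha>)\<close> unless \<open>p\<close> divides the numerator of \<open>c\<^sub>t\<close> or some \<open>n - e\<^sub>i\<close>
  (\<open>i < t\<close>) is divisible by \<open>p - 1\<close>, and \<open>j > 2 B\<^sub>T\<close> unless \<open>p - 1\<close> divides some
  \<open>n - k\<close> with \<open>1 \<le> k \<le> 2 B\<^sub>T\<close>. So \<open>C\<^sub>1 = num(c\<^sub>t) den(c\<^sub>0)\<close> and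
  \<open>C\<^sub>2 = \<Prod>(n - e\<^sub>i) \<Prod>(n - k)\<close>, over \<open>i < t\<close> and \<open>1 \<le> k \<le> 2 B\<^sub>T\<close>, work; the factor \<open>den(c\<^sub>0)\<close> makes
  \<open>f(\<alpha>) = c\<^sub>0\<close> \<open>p\<close>-integral, which together with the leading coefficient forces \<open>\<alpha>\<close>
  itself to be \<open>p\<close>-integral.\<close>

definition rat_residue :: "nat \<Rightarrow> rat \<Rightarrow> int \<Rightarrow> bool" where
  "rat_residue p q r \<longleftrightarrow> (\<exists>u v. q = of_int u / of_int v \<and> \<not> int p dvd v \<and> int p dvd v * r - u)"

lemma rat_residue_of_int:
  assumes "prime p" shows "rat_residue p (of_int n) n"
proof -
  have "\<not> int p dvd 1" using assms by (simp add: prime_nat_iff)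
  thus ?thesis unfolding rat_residue_def by (intro exI[of _ n] exI[of _ 1]) simp
qed

lemma rat_residue_add:
  assumes "prime p" "rat_residue p q r" "rat_residue p q' r'"
  shows "rat_residue p (q + q') (r + r')"
proof -
  have pr: "prime (int p)" using assms(1) by (simp add: prime_nat_int_transfer)
  obtain u v where a: "q = of_int u / of_int v" "\<not> int p dvd v" "int p dvd v * r - u"
    using assms(2) unfolding rat_residue_def by blast
  obtain u' v' where b: "q' = of_int u' / of_int v'" "\<not> int p dvd v'" "int p dvd v' * r' - u'"
    using assms(3) unfolding rat_residue_def by blast
  have "v \<noteq> 0" "v' \<noteq> 0" using a(2) b(2) by auto
  hence "q + q' = of_int (u * v' + u' * v) / of_int (v * v')" by (simp add: a(1) b(1) field_simps)
  moreover have "\<not> int p dvd v * v'" using a(2) b(2) pr by (simp add: prime_dvd_mult_iff)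
  moreover have "(v * v') * (r + r') - (u * v' + u' * v) = v' * (v * r - u) + v * (v' * r' - u')"
    by (simp add: algebra_simps)
  hence "int p dvd (v * v') * (r + r') - (u * v' + u' * v)" using a(3) b(3) by simp
  ultimately show ?thesis unfolding rat_residue_def by blast
qed

lemma rat_residue_mult:
  assumes "prime p" "rat_residue p q r" "rat_residue p q' r'"
  shows "rat_residue p (q * q') (r * r')"
proof -
  have pr: "prime (int p)" using assms(1) by (simp add: prime_nat_int_transfer)
  obtain u v where a: "q = of_int u / of_int v" "\<not> int p dvd v" "int p dvd v * r - u"
    using assms(2) unfolding rat_residue_def by blast
  obtain u' v' where b: "q' = of_int u' / of_int v'" "\<not> int p dvd v'" "int p dvd v' * r' - u'"
    using assms(3) unfolding rat_residue_def by blast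
  have "q * q' = of_int (u * u') / of_int (v * v')" by (simp add: a(1) b(1))
  moreover have "\<not> int p dvd v * v'" using a(2) b(2) pr by (simp add: prime_dvd_mult_iff)
  moreover have "(v * v') * (r * r') - u * u' = (v' * r') * (v * r - u) + u * (v' * r' - u')"
    by (simp add: algebra_simps)
  hence "int p dvd (v * v') * (r * r') - u * u'" using a(3) b(3) by simp
  ultimately show ?thesis unfolding rat_residue_def by blast
qed

lemma rat_residue_sum:
  assumes "prime p" "\<And>i. i \<in> S \<Longrightarrow> rat_residue p (f i) (g i)"
  shows "rat_residue p (\<Sum>i\<in>S. f i) (\<Sum>i\<in>S. g i)"
  using assms(2)
proof (induction S rule: infinite_finite_induct)
  case (insert x F) thus ?case using rat_residue_add[OF assms(1)] by simp
qed (use rat_residue_of_int[OF assms(1), of 0] in simp_all)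

lemma rat_residue_unique:
  assumes "prime p" "rat_residue p q r" "rat_residue p q r'"
  shows "int p dvd r - r'"
proof -
  have pr: "prime (int p)" using assms(1) by (simp add: prime_nat_int_transfer)
  obtain u v where a: "q = of_int u / of_int v" "\<not> int p dvd v" "int p dvd v * r - u"
    using assms(2) unfolding rat_residue_def by blast
  obtain u' v' where b: "q = of_int u' / of_int v'" "\<not> int p dvd v'" "int p dvd v' * r' - u'"
    using assms(3) unfolding rat_residue_def by blast
  have "v \<noteq> 0" "v' \<noteq> 0" using a(2) b(2) by auto
  moreover have "of_int u / of_int v = (of_int u' / of_int v' :: rat)" using a(1) b(1) by simp
  ultimately have "of_int (u * v') = (of_int (u' * v) :: rat)" by (simp add: field_simps)
  hence uv: "u * v' = u' * v" by (simp only: of_int_eq_iff)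
  have "(v * v') * (r - r') = v' * (v * r - u) - v * (v' * r' - u') + (u * v' - u' * v)"
    by (simp add: algebra_simps)
  hence "int p dvd (v * v') * (r - r')" using a(3) b(3) uv by simp
  moreover have "\<not> int p dvd v * v'" using a(2) b(2) pr by (simp add: prime_dvd_mult_iff)
  ultimately show ?thesis using pr by (simp add: prime_dvd_mult_iff)
qed

lemma rat_residue_dvd_numerator:
  assumes "prime p" "rat_residue p q r" "int p dvd r"
  shows "int p dvd fst (quotient_of q)"
proof -
  have pr: "prime (int p)" using assms(1) by (simp add: prime_nat_int_transfer)
  obtain u v where a: "q = of_int u / of_int v" "\<not> int p dvd v" "int p dvd v * r - u"
    using assms(2) unfolding rat_residue_def by blast
  obtain n d where nd: "quotient_of q = (n, d)" by (cases "quotient_of q") auto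
  have "d > 0" using nd quotient_of_denom_pos by blast
  moreover have "q = of_int n / of_int d" using nd quotient_of_div by blast
  moreover have "v \<noteq> 0" using a(2) by auto
  ultimately have "of_int (u * d) = (of_int (n * v) :: rat)" using a(1) by (simp add: field_simps)
  hence ud: "u * d = n * v" by (simp only: of_int_eq_iff)
  have "int p dvd v * r - (v * r - u)" using dvd_diff[OF dvd_mult[OF assms(3)] a(3)] .
  hence "int p dvd n * v" using ud[symmetric] by (simp add: dvd_mult2)
  thus ?thesis using a(2) pr nd by (simp add: prime_dvd_mult_iff)
qed

lemma rat_residue_rat_mod:
  assumes "prime p" "p_integral p q"
  shows "0 \<le> rat_mod p q \<and> rat_mod p q < int p \<and> rat_residue p q (rat_mod p q)"
proof -
  have pr: "prime (int p)" using assms(1) by (simp add: prime_nat_int_transfer)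
  obtain u v where uv: "quotient_of q = (u, v)" by (cases "quotient_of q") auto
  have nd: "\<not> int p dvd v" using assms(2) uv unfolding p_integral_def by simp
  have "coprime (int p) v" using nd pr by (simp add: prime_imp_coprime)
  hence "coprime v (int p)" by (simp add: coprime_commute)
  then obtain x where x: "[v * x = 1] (mod int p)" using cong_solve_coprime_int by blast
  define r0 where "r0 = (u * x) mod int p"
  let ?P = "\<lambda>r. 0 \<le> r \<and> r < int p \<and> [snd (quotient_of q) * r = fst (quotient_of q)] (mod int p)"
  have c0: "[v * r0 = u] (mod int p)"
  proof -
    have "[v * r0 = v * (u * x)] (mod int p)" unfolding r0_def
      by (simp add: cong_mult cong_mod_left)
    moreover have "[v * (u * x) = u * 1] (mod int p)"
      using cong_scalar_left[OF x, of u] by (simp add: ac_simps)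
    ultimately show ?thesis by (simp add: cong_trans)
  qed
  have r0: "?P r0" using c0 uv prime_gt_0_nat[OF assms(1)] unfolding r0_def by simp
  have "r = r0" if "?P r" for r
  proof -
    have "[v * r = v * r0] (mod int p)" using that uv c0 cong_sym cong_trans by fastforce
    hence "int p dvd v * (r - r0)" by (simp add: cong_iff_dvd_diff algebra_simps)
    hence "r mod int p = r0 mod int p" using nd pr by (simp add: prime_dvd_mult_iff mod_eq_dvd_iff)
    thus ?thesis using that r0 by simp
  qed
  hence "rat_mod p q = r0" unfolding rat_mod_def using r0 by (intro the_equality) blast+
  moreover have "rat_residue p q r0"
    unfolding rat_residue_def using quotient_of_div[OF uv] nd c0 by (auto simp: cong_iff_dvd_diff)
  ultimately show ?thesis using r0 by simp
qed

lemma rat_mod_0: "p > 0 \<Longrightarrow> rat_mod p 0 = 0"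
  unfolding rat_mod_def by (rule the_equality) (auto simp: cong_0_iff dest: zdvd_imp_le)

definition poly_residue :: "nat \<Rightarrow> rat poly \<Rightarrow> int poly \<Rightarrow> bool" where
  "poly_residue p f F \<longleftrightarrow> (\<forall>k. rat_residue p (coeff f k) (coeff F k))"

lemma poly_residue_const: "prime p \<Longrightarrow> rat_residue p a A \<Longrightarrow> poly_residue p [:a:] [:A:]"
  unfolding poly_residue_def using rat_residue_of_int[of p 0]
  by (auto simp: coeff_pCons split: nat.split)

lemma poly_residue_mult:
  "prime p \<Longrightarrow> poly_residue p f F \<Longrightarrow> poly_residue p g G \<Longrightarrow> poly_residue p (f * g) (F * G)"
  unfolding coeff_mult poly_residue_def by (intro allI rat_residue_sum rat_residue_mult) auto

lemma poly_residue_smult: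
  "prime p \<Longrightarrow> rat_residue p a A \<Longrightarrow> poly_residue p f F \<Longrightarrow> poly_residue p (smult a f) (smult A F)"
  by (simp add: poly_residue_def rat_residue_mult)

lemma poly_residue_power:
  assumes "prime p" "poly_residue p f F" shows "poly_residue p (f ^ n) (F ^ n)"
proof (induction n)
  case 0 thus ?case
    using poly_residue_const[OF assms(1) rat_residue_of_int[OF assms(1), of 1]] by (simp add: one_pCons)
next
  case (Suc n) thus ?case using poly_residue_mult[OF assms(1) assms(2)] by simp
qed

lemma poly_residue_sum:
  "prime p \<Longrightarrow> (\<And>i. i \<in> S \<Longrightarrow> poly_residue p (f i) (g i)) \<Longrightarrow>
    poly_residue p (\<Sum>i\<in>S. f i) (\<Sum>i\<in>S. g i)"
  by (simp add: poly_residue_def coeff_sum rat_residue_sum)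

lemma pcompose_power: "(q ^ n) \<circ>\<^sub>p r = (q \<circ>\<^sub>p r) ^ n"
  by (induction n) (simp_all add: pcompose_mult pcompose_1)

lemma pcompose_monom: "monom c n \<circ>\<^sub>p q = smult c (q ^ n)"
  by (simp add: monom_altdef pcompose_smult pcompose_power pcompose_pCons)

lemma pcompose_as_sum:
  assumes "degree f \<le> N"
  shows "f \<circ>\<^sub>p q = (\<Sum>k\<le>N. smult (coeff f k) (q ^ k))"
  by (subst poly_as_sum_of_monoms'[OF assms, symmetric]) (simp add: pcompose_sum pcompose_monom)

lemma poly_residue_pcompose:
  assumes "prime p" "poly_residue p f F" "poly_residue p q Q"
  shows "poly_residue p (f \<circ>\<^sub>p q) (F \<circ>\<^sub>p Q)"
proof -
  define N where "N = max (degree f) (degree F)"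
  have "poly_residue p (\<Sum>k\<le>N. smult (coeff f k) (q ^ k)) (\<Sum>k\<le>N. smult (coeff F k) (Q ^ k))"
    using assms by (intro poly_residue_sum poly_residue_smult poly_residue_power)
      (auto simp: poly_residue_def)
  moreover have "f \<circ>\<^sub>p q = (\<Sum>k\<le>N. smult (coeff f k) (q ^ k))"
    "F \<circ>\<^sub>p Q = (\<Sum>k\<le>N. smult (coeff F k) (Q ^ k))"
    by (rule pcompose_as_sum, simp add: N_def)+
  ultimately show ?thesis by simp
qed

lemma poly_residue_map_rat_mod:
  assumes "prime p" "\<forall>i. p_integral p (coeff f i)"
  shows "poly_residue p f (map_poly (rat_mod p) f)"
  unfolding poly_residue_def
proof
  fix k
  have "rat_mod p 0 = 0" using prime_gt_0_nat[OF assms(1)] by (rule rat_mod_0)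
  thus "rat_residue p (coeff f k) (coeff (map_poly (rat_mod p) f) k)"
    using rat_residue_rat_mod[OF assms(1)] assms(2) by (simp add: coeff_map_poly)
qed

definition x_pow_minus_x :: "nat \<Rightarrow> int poly" where
  "x_pow_minus_x p = monom 1 p - monom 1 1"

definition cong_xp :: "nat \<Rightarrow> int poly \<Rightarrow> int poly \<Rightarrow> bool" where
  "cong_xp p F G \<longleftrightarrow> (\<exists>h k. F - G = x_pow_minus_x p * h + smult (int p) k)"

lemma cong_xp_refl: "cong_xp p F F"
  unfolding cong_xp_def by (intro exI[of _ 0]) simp

lemma cong_xp_sym: "cong_xp p F G \<Longrightarrow> cong_xp p G F"
  unfolding cong_xp_def by (metis minus_diff_eq minus_add_distrib mult_minus_right smult_minus_right)

lemma cong_xp_trans: "cong_xp p F G \<Longrightarrow> cong_xp p G H \<Longrightarrow> cong_xp p F H"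
  unfolding cong_xp_def
proof (elim exE)
  fix h k h' k'
  assume "F - G = x_pow_minus_x p * h + smult (int p) k" "G - H = x_pow_minus_x p * h' + smult (int p) k'"
  hence "F - H = x_pow_minus_x p * (h + h') + smult (int p) (k + k')"
    by (simp add: algebra_simps smult_add_right)
  thus "\<exists>h k. F - H = x_pow_minus_x p * h + smult (int p) k" by blast
qed

lemma cong_xp_add: "cong_xp p F G \<Longrightarrow> cong_xp p F' G' \<Longrightarrow> cong_xp p (F + F') (G + G')"
  unfolding cong_xp_def
proof (elim exE)
  fix h k h' k'
  assume "F - G = x_pow_minus_x p * h + smult (int p) k" "F' - G' = x_pow_minus_x p * h' + smult (int p) k'"
  hence "F + F' - (G + G') = x_pow_minus_x p * (h + h') + smult (int p) (k + k')"
    by (simp add: algebra_simps smult_add_right)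
  thus "\<exists>h k. F + F' - (G + G') = x_pow_minus_x p * h + smult (int p) k" by blast
qed

lemma cong_xp_smult: "cong_xp p F G \<Longrightarrow> cong_xp p (smult a F) (smult a G)"
  unfolding cong_xp_def
proof (elim exE)
  fix h k assume "F - G = x_pow_minus_x p * h + smult (int p) k"
  hence "smult a F - smult a G = x_pow_minus_x p * smult a h + smult (int p) (smult a k)"
    by (simp flip: smult_diff_right add: smult_add_right mult.commute)
  thus "\<exists>h k. smult a F - smult a G = x_pow_minus_x p * h + smult (int p) k" by blast
qed

lemma cong_xp_sum:
  "(\<And>i. i \<in> S \<Longrightarrow> cong_xp p (f i) (g i)) \<Longrightarrow> cong_xp p (\<Sum>i\<in>S. f i) (\<Sum>i\<in>S. g i)"
  by (induction S rule: infinite_finite_induct) (simp_all add: cong_xp_refl cong_xp_add)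

lemma dvd_coeffs_iff_smult: "(\<forall>i. c dvd coeff Q i) \<longleftrightarrow> (\<exists>k. Q = smult c (k :: int poly))"
proof
  assume "\<forall>i. c dvd coeff Q i"
  hence "Q = smult c (map_poly (\<lambda>x. x div c) Q)" by (intro poly_eqI) (simp add: coeff_map_poly)
  thus "\<exists>k. Q = smult c k" by blast
qed auto

lemma cong_xp_iff: "cong_xp p F G \<longleftrightarrow> (\<exists>h. \<forall>i. int p dvd coeff (F - G - x_pow_minus_x p * h) i)"
  unfolding cong_xp_def dvd_coeffs_iff_smult by (auto simp: algebra_simps)

lemma cong_xp_if_dvd_coeffs: "(\<forall>i. int p dvd coeff (F - G) i) \<Longrightarrow> cong_xp p F G"
  unfolding cong_xp_iff by (intro exI[of _ 0]) simp

lemma add_power_prime_eq: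
  fixes a b :: "'a :: comm_ring_1"
  assumes "prime p"
  shows "\<exists>c. (a + b) ^ p = a ^ p + b ^ p + of_nat p * c"
proof -
  have p1: "p \<ge> 1" using prime_gt_1_nat[OF assms] by simp
  define g where "g k = of_nat (p choose k) * a ^ k * b ^ (p - k)" for k
  define c where "c = (\<Sum>k\<in>{1..<p}. of_nat ((p choose k) div p) * a ^ k * b ^ (p - k) :: 'a)"
  have "{..p} = insert p (insert 0 {1..<p})" using p1 by auto
  hence "(a + b) ^ p = g p + (g 0 + sum g {1..<p})"
    unfolding binomial_ring g_def[symmetric] using p1 by simp
  also have "sum g {1..<p} = of_nat p * c"
    unfolding c_def sum_distrib_left
  proof (rule sum.cong[OF refl])
    fix k assume "k \<in> {1..<p}"
    hence "p dvd p choose k" using assms by (intro dvd_choose_prime) auto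
    hence "(of_nat (p choose k) :: 'a) = of_nat p * of_nat ((p choose k) div p)"
      by (metis dvd_mult_div_cancel of_nat_mult)
    thus "g k = of_nat p * (of_nat ((p choose k) div p) * a ^ k * b ^ (p - k))"
      unfolding g_def by (simp add: ac_simps)
  qed
  finally show ?thesis unfolding g_def by (auto simp: add.assoc)
qed

lemma fermat_little_int:
  assumes "prime p" shows "int p dvd a ^ p - (a :: int)"
proof -
  have nat_case: "int p dvd int n ^ p - int n" for n
  proof (induction n)
    case 0 thus ?case using prime_gt_0_nat[OF assms] by (simp add: power_0_left)
  next
    case (Suc n)
    obtain c where "(int n + 1) ^ p = int n ^ p + 1 ^ p + of_nat p * c"
      using add_power_prime_eq[OF assms] by blast
    hence step: "int (Suc n) ^ p - int (Suc n) = (int n ^ p - int n) + int p * c"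
      by (simp add: add.commute)
    show ?case unfolding step by (intro dvd_add Suc.IH dvd_triv_left)
  qed
  define m where "m = nat (a mod int p)"
  have am: "int m = a mod int p" using prime_gt_0_nat[OF assms] unfolding m_def by simp
  have "[a ^ p = int m ^ p] (mod int p)" unfolding am by (intro cong_pow) (simp add: cong_def)
  moreover have "[int m ^ p = int m] (mod int p)" using nat_case[of m] by (simp add: cong_iff_dvd_diff)
  moreover have "[int m = a] (mod int p)" unfolding am by (simp add: cong_def)
  ultimately have "[a ^ p = a] (mod int p)" by (meson cong_trans)
  thus ?thesis by (simp add: cong_iff_dvd_diff)
qed

lemma x_pow_minus_x_pcompose_shift:
  assumes "prime p"
  shows "\<exists>k. x_pow_minus_x p \<circ>\<^sub>p [:A, 1:] = x_pow_minus_x p + smult (int p) k"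
proof -
  have shift: "[:A, 1:] = [:A:] + monom (1::int) 1" by (simp add: monom_altdef)
  obtain c where c: "([:A:] + monom 1 1) ^ p = [:A:] ^ p + (monom 1 1) ^ p + of_nat p * c"
    using add_power_prime_eq[OF assms] by blast
  obtain d where d: "A ^ p - A = int p * d" using fermat_little_int[OF assms, of A] by (auto elim: dvdE)
  have "x_pow_minus_x p \<circ>\<^sub>p [:A, 1:] = [:A, 1:] ^ p - [:A, 1:]"
    unfolding x_pow_minus_x_def by (simp add: pcompose_diff pcompose_monom)
  also have "[:A, 1:] ^ p = [:A ^ p:] + monom 1 p + smult (int p) c"
    unfolding shift c by (simp add: poly_const_pow monom_power of_nat_poly)
  also have "[:A ^ p:] + monom 1 p + smult (int p) c - [:A, 1:]
      = [:A ^ p - A:] + x_pow_minus_x p + smult (int p) c"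
    unfolding shift x_pow_minus_x_def by (simp add: algebra_simps)
  also have "[:A ^ p - A:] = smult (int p) [:d:]" using d by simp
  finally have "x_pow_minus_x p \<circ>\<^sub>p [:A, 1:] = x_pow_minus_x p + smult (int p) (c + [:d:])"
    by (simp add: algebra_simps smult_add_right)
  thus ?thesis by blast
qed

lemma cong_xp_pcompose_shift:
  assumes "prime p" "cong_xp p F G"
  shows "cong_xp p (F \<circ>\<^sub>p [:A, 1:]) (G \<circ>\<^sub>p [:A, 1:])"
proof -
  let ?s = "\<lambda>P. P \<circ>\<^sub>p [:A, 1:]"
  obtain h k where hk: "F - G = x_pow_minus_x p * h + smult (int p) k"
    using assms(2) unfolding cong_xp_def by blast
  obtain c where c: "?s (x_pow_minus_x p) = x_pow_minus_x p + smult (int p) c"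
    using x_pow_minus_x_pcompose_shift[OF assms(1)] by blast
  have "?s F - ?s G = ?s (x_pow_minus_x p) * ?s h + smult (int p) (?s k)"
    by (simp flip: pcompose_diff add: hk pcompose_add pcompose_mult pcompose_smult)
  also have "\<dots> = x_pow_minus_x p * ?s h + smult (int p) (c * ?s h + ?s k)"
    unfolding c by (simp add: algebra_simps smult_add_right)
  finally show ?thesis unfolding cong_xp_def by blast
qed

definition exp_red :: "nat \<Rightarrow> nat \<Rightarrow> nat" where
  "exp_red p k = (if k = 0 then 0 else (k - 1) mod (p - 1) + 1)"

lemma exp_red_0: "exp_red p 0 = 0"
  by (simp add: exp_red_def)

lemma exp_red_less:
  assumes "p \<ge> 2" shows "exp_red p k < p"
proof -
  have "(k - 1) mod (p - 1) < p - 1" using assms by simp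
  thus ?thesis using assms unfolding exp_red_def by (auto simp: less_diff_conv)
qed

lemma dvd_diff_exp_red:
  assumes "k \<ge> 1" shows "(p - 1) dvd k - exp_red p k" "exp_red p k \<ge> 1"
proof -
  have "k - exp_red p k = (k - 1) - (k - 1) mod (p - 1)" using assms by (simp add: exp_red_def)
  also have "\<dots> = (p - 1) * ((k - 1) div (p - 1))" by (rule minus_mod_eq_mult_div)
  finally show "(p - 1) dvd k - exp_red p k" by simp
  show "exp_red p k \<ge> 1" using assms by (simp add: exp_red_def)
qed

lemma exp_red_eq_imp_dvd:
  assumes "1 \<le> k" "k \<le> m" "exp_red p k = exp_red p m"
  shows "(p - 1) dvd m - k"
proof -
  have "(k - 1) mod (p - 1) = (m - 1) mod (p - 1)" using assms unfolding exp_red_def by simp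
  hence "(p - 1) dvd (m - 1) - (k - 1)" using assms(2) by (subst mod_eq_dvd_iff_nat[symmetric]) auto
  thus ?thesis using assms(1) by simp
qed

lemma cong_xp_monom_exp_red:
  assumes "p \<ge> 2" shows "cong_xp p (monom 1 k) (monom 1 (exp_red p k))"
proof (induction k rule: less_induct)
  case (less k)
  show ?case
  proof (cases "k < p")
    case True
    hence "exp_red p k = k" unfolding exp_red_def by auto
    thus ?thesis by (simp add: cong_xp_refl)
  next
    case False
    define k' where "k' = k - (p - 1)"
    have k': "k' < k" "k' \<ge> 1" using False assms unfolding k'_def by auto
    have "monom 1 k - monom 1 k' = x_pow_minus_x p * monom 1 (k - p)"
      unfolding x_pow_minus_x_def k'_def using False assms
      by (simp add: algebra_simps mult_monom Suc_diff_le)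
    hence "cong_xp p (monom 1 k) (monom 1 k')" unfolding cong_xp_def
      by (intro exI[of _ "monom 1 (k - p)"] exI[of _ 0]) simp
    moreover have "exp_red p k' = exp_red p k"
    proof -
      have "(k - 1) mod (p - 1) = (k - 1 - (p - 1)) mod (p - 1)"
        using False by (intro le_mod_geq) auto
      thus ?thesis using k' False assms unfolding exp_red_def k'_def by auto
    qed
    ultimately show ?thesis using less.IH[OF k'(1)] cong_xp_trans by metis
  qed
qed

definition poly_exp_red :: "nat \<Rightarrow> int poly \<Rightarrow> int poly" where
  "poly_exp_red p F = (\<Sum>k\<le>degree F. monom (coeff F k) (exp_red p k))"

lemma cong_xp_poly_exp_red:
  assumes "p \<ge> 2" shows "cong_xp p F (poly_exp_red p F)"
proof -
  have "cong_xp p (\<Sum>k\<le>degree F. smult (coeff F k) (monom 1 k))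
                  (\<Sum>k\<le>degree F. smult (coeff F k) (monom 1 (exp_red p k)))"
    using assms by (intro cong_xp_sum cong_xp_smult cong_xp_monom_exp_red)
  thus ?thesis unfolding poly_exp_red_def by (simp add: smult_monom poly_as_sum_of_monoms)
qed

lemma coeff_poly_exp_red:
  "coeff (poly_exp_red p F) j = (\<Sum>k\<le>degree F. if exp_red p k = j then coeff F k else 0)"
  unfolding poly_exp_red_def by (simp add: coeff_sum coeff_monom)

lemma degree_poly_exp_red_less:
  assumes "p \<ge> 2" shows "degree (poly_exp_red p F) < p"
proof -
  have "coeff (poly_exp_red p F) j = 0" if "j > p - 1" for j
  proof -
    have "exp_red p k \<noteq> j" for k using exp_red_less[OF assms, of k] that by linarith
    thus ?thesis by (simp add: coeff_poly_exp_red)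
  qed
  hence "degree (poly_exp_red p F) \<le> p - 1" by (intro degree_le) auto
  thus ?thesis using assms by linarith
qed

text \<open>Below degree \<open>p\<close> the congruence is coefficientwise: if \<open>h\<close> had a coefficient not divisible
  by \<open>p\<close>, the highest such coefficient \<open>h\<^sub>j\<close> would survive in coefficient \<open>p + j\<close> of
  \<open>(x\<^sup>p - x) h\<close> modulo \<open>p\<close>.\<close>
lemma cong_xp_0_imp_dvd_coeff:
  assumes "prime p" "degree Q < p" "cong_xp p Q 0"
  shows "int p dvd coeff Q i"
proof -
  have p2: "p \<ge> 2" using prime_ge_2_nat[OF assms(1)] .
  obtain h k where hk: "Q = x_pow_minus_x p * h + smult (int p) k"
    using assms(3) unfolding cong_xp_def by auto
  have "int p dvd coeff h j" for j
  proof (rule ccontr)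
    define S where "S = {j. \<not> int p dvd coeff h j}"
    assume "\<not> int p dvd coeff h j"
    hence "S \<noteq> {}" unfolding S_def by auto
    moreover have finS: "finite S"
      by (rule finite_subset[of _ "{..degree h}"]) (auto simp: S_def intro: le_degree)
    ultimately have jS: "Max S \<in> S" by (rule Max_in[rotated])
    have "p + Max S - 1 \<notin> S" using Max_ge[OF finS, of "p + Max S - 1"] p2 by auto
    hence "int p dvd coeff h (p + Max S - 1)" unfolding S_def by auto
    moreover have "coeff Q (p + Max S) = 0" using assms(2) by (intro coeff_eq_0) simp
    hence "coeff h (Max S) = coeff h (p + Max S - 1) - int p * coeff k (p + Max S)"
      unfolding hk x_pow_minus_x_def using p2 by (simp add: left_diff_distrib coeff_monom_mult)
    ultimately have "int p dvd coeff h (Max S)" by simp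
    thus False using jS unfolding S_def by auto
  qed
  then obtain h' where "h = smult (int p) h'" using dvd_coeffs_iff_smult by blast
  hence "Q = smult (int p) (x_pow_minus_x p * h' + k)" unfolding hk by (simp add: smult_add_right)
  thus ?thesis by simp
qed

lemma cong_xp_imp_dvd_coeff_diff:
  assumes "prime p" "degree F < p" "degree G < p" "cong_xp p F G"
  shows "int p dvd coeff F i - coeff G i"
proof -
  have "cong_xp p (F - G) 0" using assms(4) unfolding cong_xp_def by simp
  moreover have "degree (F - G) < p" using assms(2,3) degree_diff_le_max[of F G] by linarith
  ultimately have "int p dvd coeff (F - G) i" by (rule cong_xp_0_imp_dvd_coeff[OF assms(1), rotated])
  thus ?thesis by simp
qed

lemma poly_red_eq:
  assumes "prime p"
  shows "poly_red p f = map_poly (\<lambda>c. c mod int p) (poly_exp_red p (map_poly (rat_mod p) f))"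
proof -
  have p2: "p \<ge> 2" using prime_ge_2_nat[OF assms] .
  define F where "F = map_poly (rat_mod p) f"
  define g0 where "g0 = map_poly (\<lambda>c. c mod int p) (poly_exp_red p F)"
  define P where "P g \<longleftrightarrow> degree g < p \<and> (\<forall>i. 0 \<le> coeff g i \<and> coeff g i < int p) \<and> cong_xp p F g"
    for g
  have coeff_g0: "coeff g0 i = coeff (poly_exp_red p F) i mod int p" for i
    unfolding g0_def by (simp add: coeff_map_poly)
  have "degree g0 < p"
    using map_poly_degree_leq[of _ "poly_exp_red p F"] degree_poly_exp_red_less[OF p2, of F]
    unfolding g0_def by (meson le_less_trans)
  moreover have "cong_xp p F g0"
    using cong_xp_poly_exp_red[OF p2, of F]
    by (rule cong_xp_trans, intro cong_xp_if_dvd_coeffs) (simp add: coeff_g0 minus_mod_eq_mult_div)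
  ultimately have g0: "P g0" unfolding P_def using p2 by (simp add: coeff_g0)
  have "g = g0" if "P g" for g
  proof (rule poly_eqI)
    fix i
    have "cong_xp p g g0" using cong_xp_trans[OF cong_xp_sym] that g0 unfolding P_def by blast
    hence "int p dvd coeff g i - coeff g0 i"
      using that g0 unfolding P_def by (intro cong_xp_imp_dvd_coeff_diff[OF assms]) simp_all
    hence "coeff g i mod int p = coeff g0 i mod int p" by (simp add: mod_eq_dvd_iff)
    thus "coeff g i = coeff g0 i" using that g0 unfolding P_def by simp
  qed
  moreover have "poly_red p f = (THE g. P g)"
    unfolding poly_red_def P_def F_def cong_xp_iff x_pow_minus_x_def ..
  ultimately show ?thesis using g0 unfolding g0_def F_def by (metis the_equality)
qed

lemma degree_poly_red_less: "prime p \<Longrightarrow> degree (poly_red p f) < p"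
  using map_poly_degree_leq degree_poly_exp_red_less[OF prime_ge_2_nat] poly_red_eq
  by (metis le_less_trans)

lemma cong_xp_poly_red:
  assumes "prime p" shows "cong_xp p (map_poly (rat_mod p) f) (poly_red p f)"
  using cong_xp_poly_exp_red[OF prime_ge_2_nat[OF assms]]
  by (rule cong_xp_trans, unfold poly_red_eq[OF assms], intro cong_xp_if_dvd_coeffs)
    (simp add: coeff_map_poly minus_mod_eq_mult_div)

lemma dvd_coeff_poly_exp_red_diff:
  assumes p: "prime p" and res: "poly_residue p f F" and m: "m \<le> degree F"
    and gap: "\<forall>k. k \<noteq> m \<and> exp_red p k = exp_red p m \<longrightarrow> coeff f k = 0"
  shows "int p dvd coeff (poly_exp_red p F) (exp_red p m) - coeff F m"
proof -
  have "int p dvd (if exp_red p k = exp_red p m then coeff F k else 0)" if "k \<noteq> m" for k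
  proof (cases "exp_red p k = exp_red p m")
    case True
    hence "coeff f k = 0" using gap that by blast
    hence "rat_residue p (of_int 0) (coeff F k)" using res unfolding poly_residue_def by (metis of_int_0)
    thus ?thesis using True rat_residue_unique[OF p _ rat_residue_of_int[OF p]] by fastforce
  qed simp
  hence "int p dvd (\<Sum>k\<in>{..degree F} - {m}. if exp_red p k = exp_red p m then coeff F k else 0)"
    by (intro dvd_sum) auto
  thus ?thesis unfolding coeff_poly_exp_red using m by (simp add: sum.remove[of _ m])
qed

lemma exp_red_le_degree_poly_red:
  assumes p: "prime p" and f_int: "\<forall>i. p_integral p (coeff f i)" and \<alpha>_int: "p_integral p \<alpha>"
    and unit: "\<not> int p dvd fst (quotient_of (coeff (f \<circ>\<^sub>p [:\<alpha>, 1:]) m))"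
    and gap: "\<forall>k. k \<noteq> m \<and> exp_red p k = exp_red p m \<longrightarrow> coeff (f \<circ>\<^sub>p [:\<alpha>, 1:]) k = 0"
  shows "exp_red p m \<le> degree (poly_red p f)"
proof -
  define A where "A = rat_mod p \<alpha>"
  define F where "F = map_poly (rat_mod p) f \<circ>\<^sub>p [:A, 1:]"
  define g where "g = poly_red p f \<circ>\<^sub>p [:A, 1:]"
  have deg_g: "degree g = degree (poly_red p f)" unfolding g_def by (simp add: degree_pcompose)
  have "poly_residue p [:\<alpha>, 1:] [:A, 1:]"
    using rat_residue_rat_mod[OF p \<alpha>_int] rat_residue_of_int[OF p, of 1] rat_residue_of_int[OF p, of 0]
    unfolding poly_residue_def A_def by (auto simp: coeff_pCons split: nat.split)
  hence res: "poly_residue p (f \<circ>\<^sub>p [:\<alpha>, 1:]) F"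
    unfolding F_def using poly_residue_map_rat_mod[OF p f_int] by (intro poly_residue_pcompose[OF p])
  have unit': "\<not> int p dvd coeff F m"
    using rat_residue_dvd_numerator[OF p] res unit unfolding poly_residue_def by blast
  hence "m \<le> degree F" by (intro le_degree) auto
  hence red_F: "int p dvd coeff (poly_exp_red p F) (exp_red p m) - coeff F m"
    using dvd_coeff_poly_exp_red_diff[OF p res] gap by blast
  have "cong_xp p F g"
    unfolding F_def g_def by (intro cong_xp_pcompose_shift[OF p] cong_xp_poly_red[OF p])
  hence "cong_xp p g (poly_exp_red p F)"
    by (rule cong_xp_trans[OF cong_xp_sym cong_xp_poly_exp_red[OF prime_ge_2_nat[OF p]]])
  hence g_F: "int p dvd coeff g j - coeff (poly_exp_red p F) j" for j
    using degree_poly_red_less[OF p, of f] degree_poly_exp_red_less[OF prime_ge_2_nat[OF p], of F] deg_g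
    by (intro cong_xp_imp_dvd_coeff_diff[OF p]) simp_all
  have "int p dvd coeff g (exp_red p m) - coeff F m"
    using dvd_add[OF g_F[of "exp_red p m"] red_F] by simp
  hence "\<not> int p dvd coeff g (exp_red p m)"
    using unit' dvd_diff[of "int p" "coeff g (exp_red p m)" "coeff g (exp_red p m) - coeff F m"]
    by auto
  hence "exp_red p m \<le> degree g" by (intro le_degree) auto
  thus ?thesis using deg_g by simp
qed

lemma p_integral_if_lead_coeff_unit:
  assumes p: "prime p" and f_int: "\<forall>i. p_integral p (coeff f i)" and deg: "degree f \<ge> 1"
    and lead: "\<not> int p dvd fst (quotient_of (lead_coeff f))"
    and val: "p_integral p (poly f \<alpha>)"
  shows "p_integral p \<alpha>"
proof (rule ccontr)
  assume not_int: "\<not> p_integral p \<alpha>"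
  have pr: "prime (int p)" using p by (simp add: prime_nat_int_transfer)
  define n where "n = degree f"
  obtain a b where ab: "quotient_of \<alpha> = (a, b)" by (cases "quotient_of \<alpha>") auto
  have p_b: "int p dvd b" using not_int ab unfolding p_integral_def by simp
  have p_a: "\<not> int p dvd a"
    using coprime_common_divisor[OF quotient_of_coprime[OF ab] _ p_b] pr not_prime_unit by blast
  define F where "F k = rat_mod p (coeff f k)" for k
  have res_F: "rat_residue p (coeff f k) (F k)" for k
    unfolding F_def using rat_residue_rat_mod[OF p] f_int by blast
  have expand: "of_int b ^ n * poly f \<alpha> = (\<Sum>k\<le>n. coeff f k * of_int (a ^ k * b ^ (n - k)))"
    unfolding poly_altdef n_def[symmetric] sum_distrib_left
  proof (rule sum.cong[OF refl])
    fix k assume "k \<in> {..n}"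
    hence "(of_int b :: rat) ^ n = of_int b ^ k * of_int b ^ (n - k)" by (simp flip: power_add)
    thus "of_int b ^ n * (coeff f k * \<alpha> ^ k) = coeff f k * of_int (a ^ k * b ^ (n - k))"
      using quotient_of_denom_pos[OF ab] unfolding quotient_of_div[OF ab]
      by (simp add: power_divide field_simps)
  qed
  define S where "S = (\<Sum>k\<le>n. F k * (a ^ k * b ^ (n - k)))"
  have "rat_residue p (of_int b ^ n * poly f \<alpha>) S"
    unfolding expand S_def
    by (intro rat_residue_sum[OF p] rat_residue_mult[OF p] rat_residue_of_int[OF p] res_F)
  moreover have "rat_residue p (of_int b ^ n * poly f \<alpha>) (b ^ n * rat_mod p (poly f \<alpha>))"
    using rat_residue_mult[OF p rat_residue_of_int[OF p, of "b ^ n"]] rat_residue_rat_mod[OF p val]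
    by simp
  ultimately have S_cong: "int p dvd S - b ^ n * rat_mod p (poly f \<alpha>)"
    by (rule rat_residue_unique[OF p])
  have p_bn: "int p dvd b ^ k" if "k \<ge> 1" for k
    using dvd_trans[OF p_b dvd_power[of k b]] that by simp
  have "int p dvd S"
    using dvd_add[OF S_cong dvd_mult2[OF p_bn[of n], of "rat_mod p (poly f \<alpha>)"]] deg
    unfolding n_def by simp
  moreover have "int p dvd (\<Sum>k<n. F k * (a ^ k * b ^ (n - k)))"
    using p_bn by (intro dvd_sum) simp
  ultimately have "int p dvd F n * a ^ n"
    unfolding S_def by (simp add: lessThan_Suc_atMost[symmetric] dvd_add_right_iff)
  moreover have "\<not> int p dvd F n"
    using rat_residue_dvd_numerator[OF p res_F] lead unfolding n_def by blast
  ultimately show False using p_a pr prime_dvd_power[OF pr] by (auto simp: prime_dvd_mult_iff)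
qed

definition sparse_poly :: "(nat \<Rightarrow> 'a :: comm_monoid_add) \<Rightarrow> (nat \<Rightarrow> nat) \<Rightarrow> nat \<Rightarrow> 'a poly" where
  "sparse_poly c e t = [:c 0:] + (\<Sum>i=1..t. monom (c i) (e i))"

lemma pcompose_shift_sparse:
  fixes \<alpha> :: "'a :: comm_ring_1"
  shows "([:c 0:] + (\<Sum>i=1..t. smult (c i) ([:-\<alpha>, 1:] ^ e i))) \<circ>\<^sub>p [:\<alpha>, 1:] = sparse_poly c e t"
proof -
  have "[:-\<alpha>, 1:] \<circ>\<^sub>p [:\<alpha>, 1:] = [:0, 1:]" by (simp add: pcompose_pCons)
  thus ?thesis unfolding sparse_poly_def
    by (simp add: pcompose_add pcompose_sum pcompose_smult pcompose_power monom_altdef)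
qed

lemma coeff_sparse_poly:
  "coeff (sparse_poly c e t) k = (if k = 0 then c 0 else 0) + (\<Sum>i=1..t. if e i = k then c i else 0)"
  unfolding sparse_poly_def by (simp add: coeff_sum coeff_monom coeff_pCons split: nat.split)

lemma coeff_sparse_poly_eq_0: "k \<noteq> 0 \<Longrightarrow> k \<notin> e ` {1..t} \<Longrightarrow> coeff (sparse_poly c e t) k = 0"
  unfolding coeff_sparse_poly by (auto intro!: sum.neutral)

lemma coeff_sparse_poly_0:
  assumes "\<forall>i\<in>{1..t}. e i > 0" shows "coeff (sparse_poly c e t) 0 = c 0"
proof -
  have "(\<Sum>i=1..t. if e i = 0 then c i else 0) = 0" using assms by (intro sum.neutral) auto
  thus ?thesis unfolding coeff_sparse_poly by simp
qed

lemma coeff_sparse_poly_exp: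
  assumes "strict_mono_on {1..t} e" "\<forall>i\<in>{1..t}. e i > 0" "j \<in> {1..t}"
  shows "coeff (sparse_poly c e t) (e j) = c j"
proof -
  have "e i = e j \<longleftrightarrow> i = j" if "i \<in> {1..t}" for i
    using strict_mono_on_eqD[OF assms(1)] that assms(3) by blast
  hence "(\<Sum>i=1..t. if e i = e j then c i else 0) = (\<Sum>i=1..t. if i = j then c i else 0)"
    by (intro sum.cong) auto
  moreover have "e j \<noteq> 0" using assms(2,3) by auto
  ultimately show ?thesis unfolding coeff_sparse_poly using assms(3) by simp
qed

lemma degree_sparse_poly:
  assumes "strict_mono_on {1..t} e" "\<forall>i\<in>{1..t}. e i > 0" "t \<ge> 1" "c t \<noteq> 0"
  shows "degree (sparse_poly c e t) = e t"
proof (rule antisym)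
  have "e i \<le> e t" if "i \<in> {1..t}" for i
    using strict_mono_on_leD[OF assms(1)] that by auto
  thus "degree (sparse_poly c e t) \<le> e t"
    by (intro degree_le) (force intro!: coeff_sparse_poly_eq_0)
  have "coeff (sparse_poly c e t) (e t) = c t"
    using assms(3) by (intro coeff_sparse_poly_exp[OF assms(1,2)]) simp
  thus "e t \<le> degree (sparse_poly c e t)" using assms(4) by (intro le_degree) simp
qed

lemma coeff_sparse_poly_eq_0_if_exp_red_eq:
  assumes mono: "strict_mono_on {1..t} e" and pos: "\<forall>i\<in>{1..t}. e i > 0" and t: "t \<ge> 1"
    and gaps: "\<forall>i\<in>{1..<t}. \<not> (p - 1) dvd e t - e i"
    and k: "k \<noteq> e t" "exp_red p k = exp_red p (e t)"
  shows "coeff (sparse_poly c e t) k = 0"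
proof (rule coeff_sparse_poly_eq_0)
  have e_t: "e t \<ge> 1" using bspec[OF pos, of t] t by simp
  show "k \<noteq> 0"
  proof
    assume "k = 0"
    hence "exp_red p (e t) = 0" using k by (simp add: exp_red_0)
    thus False using dvd_diff_exp_red(2)[OF e_t, of p] by simp
  qed
  show "k \<notin> e ` {1..t}"
  proof
    assume "k \<in> e ` {1..t}"
    then obtain i where i: "i \<in> {1..t}" "k = e i" by blast
    hence "i \<noteq> t" using k(1) by blast
    hence "i \<in> {1..<t}" using i(1) by simp
    moreover have "e i \<le> e t" using strict_mono_on_leD[OF mono] i(1) by simp
    moreover have "e i \<ge> 1" using bspec[OF pos i(1)] by simp
    ultimately have "(p - 1) dvd e t - e i" using exp_red_eq_imp_dvd[of "e i" "e t" p] k i(2) by simp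
    thus False using gaps \<open>i \<in> {1..<t}\<close> by blast
  qed
qed

lemma exp_red_gt:
  assumes "m \<ge> 1" "\<forall>k\<in>{1..B}. \<not> (p - 1) dvd m - k"
  shows "B < exp_red p m"
  using dvd_diff_exp_red[OF assms(1), of p] assms(2) by (meson atLeastAtMost_iff not_less)

lemma degree_poly_red_gt_if_sparse_shift:
  assumes p: "prime p" and f_int: "\<forall>i. p_integral p (coeff f i)"
    and shift: "f \<circ>\<^sub>p [:\<alpha>, 1:] = sparse_poly c e t"
    and mono: "strict_mono_on {1..t} e" and pos: "\<forall>i\<in>{1..t}. e i > 0" and t: "t \<ge> 1"
    and lead: "\<not> int p dvd fst (quotient_of (c t))" and const: "p_integral p (c 0)"
    and gaps: "\<forall>i\<in>{1..<t}. \<not> (p - 1) dvd e t - e i"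
    and low: "\<forall>k\<in>{1..B}. \<not> (p - 1) dvd e t - k"
  shows "B < degree (poly_red p f)"
proof -
  let ?g = "sparse_poly c e t"
  have e_t: "e t \<ge> 1" using bspec[OF pos, of t] t by simp
  have "c t \<noteq> 0" using lead by auto
  hence deg_g: "degree ?g = e t" by (rule degree_sparse_poly[OF mono pos t])
  have coeff_t: "coeff ?g (e t) = c t" using t by (intro coeff_sparse_poly_exp[OF mono pos]) simp
  have "lead_coeff ?g = lead_coeff f" using lead_coeff_comp[of "[:\<alpha>, 1:]" f] by (simp add: shift)
  hence lc: "lead_coeff f = c t" using deg_g coeff_t by simp
  have val: "poly f \<alpha> = c 0"
    using poly_pcompose[of f "[:\<alpha>, 1:]" 0] by (simp add: shift poly_0_coeff_0 coeff_sparse_poly_0[OF pos])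
  have \<alpha>_int: "p_integral p \<alpha>"
  proof (rule p_integral_if_lead_coeff_unit[OF p f_int])
    show "degree f \<ge> 1" using deg_g e_t by (simp flip: shift add: degree_pcompose)
    show "\<not> int p dvd fst (quotient_of (lead_coeff f))" unfolding lc by (rule lead)
    show "p_integral p (poly f \<alpha>)" unfolding val by (rule const)
  qed
  have "exp_red p (e t) \<le> degree (poly_red p f)"
  proof (rule exp_red_le_degree_poly_red[OF p f_int \<alpha>_int])
    show "\<not> int p dvd fst (quotient_of (coeff (f \<circ>\<^sub>p [:\<alpha>, 1:]) (e t)))"
      using coeff_t lead by (simp add: shift)
    show "\<forall>k. k \<noteq> e t \<and> exp_red p k = exp_red p (e t) \<longrightarrow> coeff (f \<circ>\<^sub>p [:\<alpha>, 1:]) k = 0"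
      unfolding shift using coeff_sparse_poly_eq_0_if_exp_red_eq[OF mono pos t gaps] by blast
  qed
  thus ?thesis using exp_red_gt[OF e_t low] by simp
qed

lemma log2_le_nat_ceiling_log2_plus_1:
  fixes n :: int
  assumes "n > 0" shows "log 2 (real_of_int n) \<le> real (nat \<lceil>log 2 (real_of_int (n + 1))\<rceil>)"
proof -
  have "log 2 (real_of_int n) \<le> log 2 (real_of_int (n + 1))" using assms by simp
  also have "\<dots> \<le> of_int \<lceil>log 2 (real_of_int (n + 1))\<rceil>" by (rule le_of_int_ceiling)
  finally show ?thesis by linarith
qed

lemma log2_numerator_le_rat_size:
  assumes "fst (quotient_of q) \<noteq> 0"
  shows "log 2 \<bar>real_of_int (fst (quotient_of q))\<bar> \<le> real (rat_size q)"
proof -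
  obtain a b where ab: "quotient_of q = (a, b)" by (cases "quotient_of q") auto
  have bound: "log 2 (real_of_int \<bar>a\<bar>) \<le> real (nat \<lceil>log 2 (real_of_int (\<bar>a\<bar> + 1))\<rceil>)"
    using assms ab by (intro log2_le_nat_ceiling_log2_plus_1) simp
  have "real (nat \<lceil>log 2 (real_of_int (\<bar>a\<bar> + 1))\<rceil>) \<le> real (rat_size q)"
    unfolding of_nat_le_iff rat_size_def ab prod.case by linarith
  thus ?thesis using order_trans[OF bound] ab by simp
qed

lemma log2_denominator_le_rat_size:
  "log 2 (real_of_int (snd (quotient_of q))) \<le> real (rat_size q)"
proof -
  obtain a b where ab: "quotient_of q = (a, b)" by (cases "quotient_of q") auto
  have bound: "log 2 (real_of_int b) \<le> real (nat \<lceil>log 2 (real_of_int (b + 1))\<rceil>)"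
    using quotient_of_denom_pos[OF ab] by (rule log2_le_nat_ceiling_log2_plus_1)
  have "real (nat \<lceil>log 2 (real_of_int (b + 1))\<rceil>) \<le> real (rat_size q)"
    unfolding of_nat_le_iff rat_size_def ab prod.case by linarith
  thus ?thesis using order_trans[OF bound] ab by simp
qed

lemma log2_prod_le:
  assumes "\<forall>i\<in>I. 1 \<le> a i \<and> a i \<le> n" "n \<ge> 1"
  shows "log 2 (real (\<Prod>i\<in>I. a i)) \<le> real (card I) * log 2 (real n)"
proof -
  define P where "P = (\<Prod>i\<in>I. a i)"
  have "1 \<le> P" unfolding P_def using assms(1) by (intro prod_ge_1) auto
  moreover have "P \<le> n ^ card I" unfolding P_def using assms by (intro prod_le_power) auto
  hence "real P \<le> real n ^ card I" by (metis of_nat_le_iff of_nat_power)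
  ultimately have "log 2 (real P) \<le> log 2 (real n ^ card I)" by (intro log_mono) auto
  thus ?thesis unfolding P_def using assms(2) by (simp add: log_nat_power)
qed

lemma log2_mult_prod_le:
  assumes "\<forall>i\<in>I. 1 \<le> a i \<and> a i \<le> n" "\<forall>k\<in>K. 1 \<le> b k \<and> b k \<le> n" "n \<ge> 1"
  shows "log 2 (real ((\<Prod>i\<in>I. a i) * (\<Prod>k\<in>K. b k))) \<le> real (card I + card K) * log 2 (real n)"
proof -
  have "0 < (\<Prod>i\<in>I. a i)" "0 < (\<Prod>k\<in>K. b k)" using assms(1,2) by (auto intro!: prod_pos)
  hence "log 2 (real ((\<Prod>i\<in>I. a i) * (\<Prod>k\<in>K. b k)))
      = log 2 (real (\<Prod>i\<in>I. a i)) + log 2 (real (\<Prod>k\<in>K. b k))"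
    unfolding of_nat_mult by (intro log_mult_pos) (simp_all only: of_nat_0_less_iff)
  thus ?thesis using log2_prod_le[OF assms(1,3)] log2_prod_le[OF assms(2,3)] by (simp add: algebra_simps)
qed

lemma fst_quotient_of_eq_0_iff: "fst (quotient_of q) = 0 \<longleftrightarrow> q = 0"
  using quotient_of_div[of q "fst (quotient_of q)" "snd (quotient_of q)"] by (auto simp: rat_zero_code)

lemma log2_numerator_mult_denominator_le:
  assumes "q \<noteq> 0"
  shows "log 2 (real (nat \<bar>fst (quotient_of q) * snd (quotient_of r)\<bar>))
           \<le> real (rat_size q) + real (rat_size r)"
proof -
  have num: "fst (quotient_of q) \<noteq> 0" using assms by (simp add: fst_quotient_of_eq_0_iff)
  have den: "snd (quotient_of r) > 0" by (rule quotient_of_denom_pos')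
  have "real (nat \<bar>fst (quotient_of q) * snd (quotient_of r)\<bar>)
          = \<bar>real_of_int (fst (quotient_of q))\<bar> * real_of_int (snd (quotient_of r))"
    using den by (simp add: abs_mult)
  thus ?thesis using num den log2_numerator_le_rat_size[OF num] log2_denominator_le_rat_size[of r]
    by (simp add: log_mult)
qed

theorem mainTheorem2:
  fixes \<alpha> :: rat and f :: "rat poly" and t :: nat and c :: "nat \<Rightarrow> rat" and e :: "nat \<Rightarrow> nat"
    and B_T B_H B_N :: nat
  assumes f_def: "f = [:c 0:] + (\<Sum>i=1..t. smult (c i) ([:-\<alpha>, 1:] ^ e i))"
    and c_nz: "\<forall>i\<in>{1..t}. c i \<noteq> 0"
    and e_pos: "t \<ge> 1 \<longrightarrow> 0 < e 1"
    and e_mono: "\<forall>i j. 1 \<le> i \<and> i < j \<and> j \<le> t \<longrightarrow> e i < e j"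
    and BT: "t \<le> B_T"
    and BH: "\<forall>i\<le>t. rat_size (c i) \<le> B_H"
    and BN: "log 2 (real (degree f)) \<le> real B_N"
    and deg: "degree f > 2 * B_T"
  shows "\<exists>C1 C2 :: nat. C1 \<ge> 1 \<and> C2 \<ge> 1 \<and>
           log 2 (real C1) \<le> 2 * real B_H \<and>
           log 2 (real C2) \<le> real B_N * (3 * real B_T - 1) \<and>
           (\<forall>p. prime p \<and> \<not> p dvd C1 \<and> \<not> (p - 1) dvd C2 \<and>
                (\<forall>i. p_integral p (coeff f i))
                \<longrightarrow> degree (poly_red p f) > 2 * B_T)"
proof -
  have shift: "f \<circ>\<^sub>p [:\<alpha>, 1:] = sparse_poly c e t" unfolding f_def by (rule pcompose_shift_sparse)
  have t: "t \<ge> 1" using deg f_def by (cases t) auto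
  have mono: "strict_mono_on {1..t} e" using e_mono by (auto intro: strict_mono_onI)
  have pos: "\<forall>i\<in>{1..t}. e i > 0" using e_pos t strict_mono_on_leD[OF mono, of 1] by fastforce
  define n where "n = e t"
  have "c t \<noteq> 0" using c_nz t by simp
  hence "degree (sparse_poly c e t) = n" unfolding n_def by (rule degree_sparse_poly[OF mono pos t])
  hence deg_f: "degree f = n" using degree_pcompose[of f "[:\<alpha>, 1:]"] by (simp add: shift)
  define C1 where "C1 = nat \<bar>fst (quotient_of (c t)) * snd (quotient_of (c 0))\<bar>"
  define C2 where "C2 = (\<Prod>i\<in>{1..<t}. n - e i) * (\<Prod>k\<in>{1..2 * B_T}. n - k)"
  have gap_factors: "\<forall>i\<in>{1..<t}. 1 \<le> n - e i \<and> n - e i \<le> n"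
  proof
    fix i assume "i \<in> {1..<t}"
    hence "e i < e t" using strict_mono_onD[OF mono] t by simp
    thus "1 \<le> n - e i \<and> n - e i \<le> n" unfolding n_def by simp
  qed
  have low_factors: "\<forall>k\<in>{1..2 * B_T}. 1 \<le> n - k \<and> n - k \<le> n" using deg deg_f by auto
  have "C1 \<ge> 1" using c_nz t quotient_of_denom_pos'[of "c 0"] unfolding C1_def
    by (simp add: Suc_le_eq fst_quotient_of_eq_0_iff)
  moreover have "C2 \<ge> 1" unfolding C2_def using gap_factors low_factors by (simp add: Suc_le_eq prod_pos)
  moreover have "log 2 (real C1) \<le> 2 * real B_H"
  proof -
    have "real (rat_size (c t)) \<le> B_H" "real (rat_size (c 0)) \<le> B_H" using BH by simp_all
    thus ?thesis using log2_numerator_mult_denominator_le[of "c t" "c 0"] c_nz t unfolding C1_def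
      by simp
  qed
  moreover have "log 2 (real C2) \<le> real B_N * (3 * real B_T - 1)"
  proof -
    have "log 2 (real C2) \<le> real (t - 1 + 2 * B_T) * log 2 (real n)"
      unfolding C2_def using log2_mult_prod_le[OF gap_factors low_factors] deg deg_f by simp
    also have "\<dots> \<le> real (t - 1 + 2 * B_T) * real B_N" using BN deg_f by (intro mult_left_mono) simp_all
    also have "\<dots> \<le> real B_N * (3 * real B_T - 1)" using t BT by (simp add: mult.commute mult_left_mono)
    finally show ?thesis .
  qed
  moreover have "degree (poly_red p f) > 2 * B_T"
    if p: "prime p" "\<not> p dvd C1" "\<not> (p - 1) dvd C2" and f_int: "\<forall>i. p_integral p (coeff f i)" for p
  proof (rule degree_poly_red_gt_if_sparse_shift[OF p(1) f_int shift mono pos t])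
    show "\<not> int p dvd fst (quotient_of (c t))" "p_integral p (c 0)"
      using p(2) unfolding C1_def p_integral_def by auto
    have "(n - e i) dvd C2" if "i \<in> {1..<t}" for i
      unfolding C2_def using that by (intro dvd_mult2 dvd_prodI) auto
    thus "\<forall>i\<in>{1..<t}. \<not> (p - 1) dvd e t - e i" using p(3) dvd_trans unfolding n_def by blast
    have "(n - k) dvd C2" if "k \<in> {1..2 * B_T}" for k
      unfolding C2_def using that by (intro dvd_mult dvd_prodI) auto
    thus "\<forall>k\<in>{1..2 * B_T}. \<not> (p - 1) dvd e t - k" using p(3) dvd_trans unfolding n_def by blast
  qed
  ultimately show ?thesis by blast
qed

end
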